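(* Let $S:\overline{\mathcal{D}}\to\widehat{\mathbb{C}}$ be a weak B-involution with $\mathcal{D}=\bigsqcup_{i=1}^k\Omega_i$, with welded surface $\Sigma$, involution $\eta$ and welding graph $\mathcal{G}$. Let $\mathcal{C}_\Sigma$ be a component of $\Sigma$ and $\mathcal{C}_\mathcal{G}$ the corresponding component of $\mathcal{G}$, with vertex set $\{v_{i_1}^-,\dots,v_{i_\alpha}^-,v_{j_1}^+,\dots,v_{j_\beta}^+\}$. Then the following are equivalent: (a) $\eta(\mathcal{C}_\Sigma)=\mathcal{C}_\Sigma$; (b) $\widehat\eta(\mathcal{C}_\mathcal{G})=\mathcal{C}_\mathcal{G}$; (c) $\{i_1,\dots,i_\alpha\}=\{j_1,\dots,j_\beta\}$; (d) $\{i_1,\dots,i_\alpha\}\cap\{j_1,\dots,j_\beta\}\ne\emptyset$.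
   Context: $\Omega_1,\dots,\Omega_k$ are pairwise disjoint finitely connected proper subdomains of $\widehat{\mathbb{C}}$ with $\mathrm{int}(\overline{\Omega_i})=\Omega_i$; $X\subset\partial\mathcal{D}$ finite with $\partial^0\mathcal{D}=\partial\mathcal{D}\setminus X$ a finite union of disjoint non-singular real-analytic curves; $S$ continuous on $\overline{\mathcal{D}}$, meromorphic on $\mathcal{D}$, mapping $\partial\mathcal{D}$ and $X$ to themselves with $S\circ S=\mathrm{id}$ on $\partial\mathcal{D}$, orientation-reversing on $\partial^0\mathcal{D}$. Set $\partial^0\Omega_i=\partial^0\mathcal{D}\cap\overline{\Omega_i}$. The welded surface $\Sigma$ is the compactification of the Riemann surface obtained from two copies of $\mathcal{D}\cup\partial^0\mathcal{D}$ by identifying $x\in\partial^0\mathcal{D}$ in the first copy with $S(x)$ in the second; $\Omega_i^-$ and $\Omega_i^+$ denote the copies of $\Omega_i$ in the first and second copy, and $\eta$ is the conformal involution of $\Sigma$ interchanging the two copies (sending the point $x$ of the first copy to the point $x$ of the second copy), so $\eta(\Omega_i^-)=\Omega_i^+$. The welding graph $\mathcal{G}$ has vertices $v_i^\pm$ with edges exactly between $v_{i_1}^-$ and $v_{i_2}^+$ when $S(\partial^0\Omega_{i_1})\cap\partial^0\Omega_{i_2}\neq\emptyset$; vertex $v_i^\pm$ corresponds to $\Omega_i^\pm$, and the component $\mathcal{C}_\mathcal{G}$ corresponds to $\mathcal{C}_\Sigma$ when $\mathcal{C}_\Sigma\setminus\partial\mathfrak{D}$ is the union of the $\Omega_i^\pm$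 for $v_i^\pm\in\mathcal{C}_\mathcal{G}$ ($\mathfrak{D}$ the first copy of $\mathcal{D}$). $\widehat\eta$ is the involution of the vertex set with $\widehat\eta(v_i^\pm)=v_i^\mp$. *)

theory Defs
  imports "HOL-Analysis.Analysis"
begin

section \<open>The Riemann sphere, modelled as the unit sphere in C x R\<close>

type_synonym sp = "complex \<times> real"

definition RS :: "sp set" where "RS = sphere 0 1"

definition pole :: "bool \<Rightarrow> sp" where
  "pole a = (0, if a then 1 else -1)"

text \<open>Stereographic charts (holomorphically compatible: chart False = 1 / chart True)\<close>
definition chart :: "bool \<Rightarrow> sp \<Rightarrow> complex" where
  "chart a p = (if a then fst p / complex_of_real (1 - snd p)
                else cnj (fst p) / complex_of_real (1 + snd p))"

definition chart_inv :: "bool \<Rightarrow> complex \<Rightarrow> sp" where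
  "chart_inv a z = (if a then (2 * z / complex_of_real ((cmod z)\<^sup>2 + 1), ((cmod z)\<^sup>2 - 1) / ((cmod z)\<^sup>2 + 1))
                    else (2 * cnj z / complex_of_real ((cmod z)\<^sup>2 + 1), (1 - (cmod z)\<^sup>2) / ((cmod z)\<^sup>2 + 1)))"

text \<open>f is holomorphic (as a map into the Riemann sphere) near p, i.e. meromorphic at p\<close>
definition sph_holo_at :: "(sp \<Rightarrow> sp) \<Rightarrow> sp \<Rightarrow> bool" where
  "sph_holo_at f p \<longleftrightarrow> (\<exists>a b r. p \<noteq> pole a \<and> f p \<noteq> pole b \<and> r > 0 \<and>
      (\<forall>z\<in>ball (chart a p) r. f (chart_inv a z) \<noteq> pole b) \<and>
      (\<lambda>z. chart b (f (chart_inv a z))) holomorphic_on ball (chart a p) r)"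

definition sph_meromorphic_on :: "(sp \<Rightarrow> sp) \<Rightarrow> sp set \<Rightarrow> bool" where
  "sph_meromorphic_on f D \<longleftrightarrow> (\<forall>p\<in>D. sph_holo_at f p)"

definition fc_proper_domain :: "sp set \<Rightarrow> bool" where
  "fc_proper_domain \<Omega> \<longleftrightarrow> \<Omega> \<subseteq> RS \<and> \<Omega> \<noteq> RS \<and> \<Omega> \<noteq> {} \<and>
      openin (top_of_set RS) \<Omega> \<and> connected \<Omega> \<and> finite (components (RS - \<Omega>))"

definition real_analytic_on :: "(real \<Rightarrow> 'a::real_normed_vector) \<Rightarrow> real set \<Rightarrow> bool" where
  "real_analytic_on \<gamma> T \<longleftrightarrow> (\<forall>t\<in>T. \<exists>r>0. \<exists>c::nat \<Rightarrow> 'a.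
      \<forall>s. \<bar>s - t\<bar> < r \<longrightarrow> (\<lambda>n. ((s - t) ^ n) *\<^sub>R c n) sums \<gamma> s)"

definition regular_on :: "(real \<Rightarrow> 'a::real_normed_vector) \<Rightarrow> real set \<Rightarrow> bool" where
  "regular_on \<gamma> T \<longleftrightarrow> (\<forall>t\<in>T. \<exists>v. (\<gamma> has_vector_derivative v) (at t) \<and> v \<noteq> 0)"

text \<open>A non-singular real-analytic (embedded) curve: an open arc or a closed curve\<close>
definition analytic_curve :: "sp set \<Rightarrow> bool" where
  "analytic_curve C \<longleftrightarrow>
     (\<exists>\<gamma> a b. a < b \<and> real_analytic_on \<gamma> {a<..<b} \<and> regular_on \<gamma> {a<..<b} \<and>
        inj_on \<gamma> {a<..<b} \<and> C = \<gamma> ` {a<..<b} \<and> continuous_on C (inv_into {a<..<b} \<gamma>)) \<or>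
     (\<exists>\<gamma>. real_analytic_on \<gamma> UNIV \<and> regular_on \<gamma> UNIV \<and> (\<forall>t. \<gamma> (t + 1) = \<gamma> t) \<and>
        inj_on \<gamma> {0..<1} \<and> C = \<gamma> ` {0..1})"

text \<open>gamma is a positively oriented (D on the left, in chart a) local regular analytic
  parametrisation of the boundary piece B near x\<close>
definition pos_bparam :: "sp set \<Rightarrow> sp set \<Rightarrow> sp \<Rightarrow> (real \<Rightarrow> sp) \<Rightarrow> real \<Rightarrow> bool \<Rightarrow> bool" where
  "pos_bparam D B x \<gamma> r a \<longleftrightarrow> r > 0 \<and> \<gamma> 0 = x \<and> \<gamma> ` {-r<..<r} \<subseteq> B \<and>
     real_analytic_on \<gamma> {-r<..<r} \<and> regular_on \<gamma> {-r<..<r} \<and> inj_on \<gamma> {-r<..<r} \<and>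
     (\<forall>t\<in>{-r<..<r}. \<gamma> t \<noteq> pole a \<and>
        (\<exists>v. ((\<lambda>s. chart a (\<gamma> s)) has_vector_derivative v) (at t) \<and>
           (\<exists>e>0. \<forall>\<epsilon>. 0 < \<epsilon> \<and> \<epsilon> < e \<longrightarrow>
              chart_inv a (chart a (\<gamma> t) + complex_of_real \<epsilon> * \<i> * v) \<in> D)))"

definition orientation_reversing_on :: "(sp \<Rightarrow> sp) \<Rightarrow> sp set \<Rightarrow> sp set \<Rightarrow> bool" where
  "orientation_reversing_on S D B \<longleftrightarrow> (\<forall>x\<in>B. \<exists>\<gamma> \<delta> r a b h.
      pos_bparam D B x \<gamma> r a \<and> pos_bparam D B (S x) \<delta> r b \<and>
      h 0 = 0 \<and> continuous_on {-r<..<r} h \<and> h ` {-r<..<r} \<subseteq> {-r<..<r} \<and>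
      (\<forall>s\<in>{-r<..<r}. \<forall>t\<in>{-r<..<r}. s < t \<longrightarrow> h t < h s) \<and>
      (\<forall>t\<in>{-r<..<r}. S (\<gamma> t) = \<delta> (h t)))"

definition bdD :: "sp set \<Rightarrow> sp set" where "bdD D = closure D - D"

definition weak_B_involution ::
  "nat \<Rightarrow> (nat \<Rightarrow> sp set) \<Rightarrow> sp set \<Rightarrow> (sp \<Rightarrow> sp) \<Rightarrow> bool" where
  "weak_B_involution k \<Omega> X S \<longleftrightarrow>
     (let D = (\<Union>i\<in>{1..k}. \<Omega> i); B = bdD D - X in
      (\<forall>i\<in>{1..k}. fc_proper_domain (\<Omega> i) \<and>
          (top_of_set RS) interior_of (closure (\<Omega> i)) = \<Omega> i) \<and>
      (\<forall>i\<in>{1..k}. \<forall>j\<in>{1..k}. i \<noteq> j \<longrightarrow> \<Omega> i \<inter> \<Omega> j = {}) \<and>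
      finite X \<and> X \<subseteq> bdD D \<and>
      (\<exists>\<C>. finite \<C> \<and> (\<forall>C\<in>\<C>. analytic_curve C) \<and> pairwise disjnt \<C> \<and> \<Union>\<C> = B) \<and>
      continuous_on (closure D) S \<and> S ` closure D \<subseteq> RS \<and>
      sph_meromorphic_on S D \<and>
      S ` bdD D \<subseteq> bdD D \<and> S ` X \<subseteq> X \<and> (\<forall>x\<in>bdD D. S (S x) = x) \<and>
      orientation_reversing_on S D B)"

definition qtop :: "'a topology \<Rightarrow> ('a \<Rightarrow> 'a set) \<Rightarrow> 'a set topology" where
  "qtop X cl = topology (\<lambda>U. U \<subseteq> cl ` topspace X \<and> openin X {x \<in> topspace X. cl x \<in> U})"

section \<open>The welded surface (without its finitely many compactification points)\<close>

definition wD :: "nat \<Rightarrow> (nat \<Rightarrow> sp set) \<Rightarrow> sp set" where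
  "wD k \<Omega> = (\<Union>i\<in>{1..k}. \<Omega> i)"

text \<open>boundary minus X, i.e. the real-analytic part of the boundary\<close>
definition wB :: "nat \<Rightarrow> (nat \<Rightarrow> sp set) \<Rightarrow> sp set \<Rightarrow> sp set" where
  "wB k \<Omega> X = bdD (wD k \<Omega>) - X"

text \<open>(False, x) is x in the first copy, (True, x) is x in the second copy\<close>
definition wpts :: "nat \<Rightarrow> (nat \<Rightarrow> sp set) \<Rightarrow> sp set \<Rightarrow> (bool \<times> sp) set" where
  "wpts k \<Omega> X = UNIV \<times> (wD k \<Omega> \<union> wB k \<Omega> X)"

definition wrel :: "nat \<Rightarrow> (nat \<Rightarrow> sp set) \<Rightarrow> sp set \<Rightarrow> (sp \<Rightarrow> sp) \<Rightarrow> bool \<times> sp \<Rightarrow> bool \<times> sp \<Rightarrow> bool" where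
  "wrel k \<Omega> X S p q \<longleftrightarrow> p = q \<or> (\<exists>x\<in>wB k \<Omega> X.
       (p = (False, x) \<and> q = (True, S x)) \<or> (p = (True, S x) \<and> q = (False, x)))"

definition wclass :: "nat \<Rightarrow> (nat \<Rightarrow> sp set) \<Rightarrow> sp set \<Rightarrow> (sp \<Rightarrow> sp) \<Rightarrow> bool \<times> sp \<Rightarrow> (bool \<times> sp) set" where
  "wclass k \<Omega> X S p = {q \<in> wpts k \<Omega> X. wrel k \<Omega> X S p q}"

definition welded_surface :: "nat \<Rightarrow> (nat \<Rightarrow> sp set) \<Rightarrow> sp set \<Rightarrow> (sp \<Rightarrow> sp) \<Rightarrow> (bool \<times> sp) set topology" where
  "welded_surface k \<Omega> X S =
     qtop (subtopology (prod_topology (discrete_topology UNIV) (top_of_set RS)) (wpts k \<Omega> X))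
          (wclass k \<Omega> X S)"

definition weta :: "(bool \<times> sp) set \<Rightarrow> (bool \<times> sp) set" where
  "weta c = (\<lambda>(b, x). (\<not> b, x)) ` c"

text \<open>the copy Omega_i^- (b = False) or Omega_i^+ (b = True) inside the welded surface\<close>
definition wcopy :: "nat \<Rightarrow> (nat \<Rightarrow> sp set) \<Rightarrow> sp set \<Rightarrow> (sp \<Rightarrow> sp) \<Rightarrow> bool \<times> nat \<Rightarrow> (bool \<times> sp) set set" where
  "wcopy k \<Omega> X S v = wclass k \<Omega> X S ` ({fst v} \<times> \<Omega> (snd v))"

text \<open>the boundary of the first copy of D inside the welded surface (the seam)\<close>
definition wseam :: "nat \<Rightarrow> (nat \<Rightarrow> sp set) \<Rightarrow> sp set \<Rightarrow> (sp \<Rightarrow> sp) \<Rightarrow> (bool \<times> sp) set set" where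
  "wseam k \<Omega> X S = wclass k \<Omega> X S ` ({False} \<times> wB k \<Omega> X)"

text \<open>vertex (False, i) is v_i^-, vertex (True, i) is v_i^+\<close>
definition gverts :: "nat \<Rightarrow> (bool \<times> nat) set" where
  "gverts k = UNIV \<times> {1..k}"

definition bd0 :: "nat \<Rightarrow> (nat \<Rightarrow> sp set) \<Rightarrow> sp set \<Rightarrow> nat \<Rightarrow> sp set" where
  "bd0 k \<Omega> X i = wB k \<Omega> X \<inter> closure (\<Omega> i)"

definition gedges :: "nat \<Rightarrow> (nat \<Rightarrow> sp set) \<Rightarrow> sp set \<Rightarrow> (sp \<Rightarrow> sp) \<Rightarrow> ((bool \<times> nat) \<times> (bool \<times> nat)) set" where
  "gedges k \<Omega> X S =
     {((False, i), (True, j)) | i j. i \<in> {1..k} \<and> j \<in> {1..k} \<and> S ` bd0 k \<Omega> X i \<inter> bd0 k \<Omega> X j \<noteq> {}} \<union>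
     {((True, j), (False, i)) | i j. i \<in> {1..k} \<and> j \<in> {1..k} \<and> S ` bd0 k \<Omega> X i \<inter> bd0 k \<Omega> X j \<noteq> {}}"

definition graph_component :: "nat \<Rightarrow> (nat \<Rightarrow> sp set) \<Rightarrow> sp set \<Rightarrow> (sp \<Rightarrow> sp) \<Rightarrow> (bool \<times> nat) set \<Rightarrow> bool" where
  "graph_component k \<Omega> X S CG \<longleftrightarrow>
     (\<exists>v\<in>gverts k. CG = {w \<in> gverts k. (v, w) \<in> (gedges k \<Omega> X S)\<^sup>*})"

definition eta_hat :: "bool \<times> nat \<Rightarrow> bool \<times> nat" where
  "eta_hat v = (\<not> fst v, snd v)"

end

theory Submission
  imports Defs
begin

text \<open>
  The swap \<open>(b, x) \<mapsto> (\<not> b, x)\<close> of the two copies of \<open>\<D> \<union> \<partial>\<^sup>0\<D>\<close> maps welding classes to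
  welding classes because \<open>S\<close> is an involution of \<open>\<partial>\<^sup>0\<D>\<close>, so it descends to a continuous
  involution \<open>\<eta>\<close> of \<open>\<Sigma>\<close>. A connected component that meets its image under a continuous
  involution is invariant, and interior points of \<open>\<Omega>\<^sub>i\<^sup>\<plusminus>\<close> are not welded, so they lie in
  \<open>C\<^sub>\<Sigma>\<close> exactly when \<open>v\<^sub>i\<^sup>\<plusminus>\<close> lies in \<open>C\<^sub>G\<close>; this gives (a) \<open>\<longleftrightarrow>\<close> (b).
  For the same reason \<open>eta_hat\<close> is an automorphism of the symmetric welding graph, so a graph
  component containing both \<open>v\<^sub>i\<^sup>-\<close> and \<open>v\<^sub>i\<^sup>+\<close> is \<open>eta_hat\<close>-invariant: (d) \<open>\<longrightarrow>\<close> (b).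
\<close>

lemma image_eq_if_involution:
  assumes "\<And>x. h (h x) = x" and "h ` C \<subseteq> C"
  shows "h ` C = C"
proof
  have "C = h ` h ` C" by (simp add: image_image assms(1))
  also have "\<dots> \<subseteq> h ` C" using assms(2) by blast
  finally show "C \<subseteq> h ` C" .
qed (fact assms(2))

lemma rtrancl_component_image_eq_if_meets:
  assumes "sym R" and hom: "\<And>u w. (u, w) \<in> R \<Longrightarrow> (h u, h w) \<in> R"
    and "h ` V \<subseteq> V" and inv: "\<And>v. h (h v) = v"
    and C: "C = {w \<in> V. (v0, w) \<in> R\<^sup>*}" and "x \<in> C" and "h x \<in> C"
  shows "h ` C = C"
proof (rule image_eq_if_involution[OF inv])
  have hom_rtrancl: "(h u, h w) \<in> R\<^sup>*" if "(u, w) \<in> R\<^sup>*" for u w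
    using that
  proof (induction rule: rtrancl_induct)
    case (step y z)
    then show ?case using hom by (blast intro: rtrancl_into_rtrancl)
  qed simp
  have mem_C: "w \<in> C \<longleftrightarrow> w \<in> V \<and> (v0, w) \<in> R\<^sup>*" for w
    using C by blast
  have sym_rtrancl_R: "(w, u) \<in> R\<^sup>*" if "(u, w) \<in> R\<^sup>*" for u w
    using sym_rtrancl[OF \<open>sym R\<close>] that by (rule symD)
  have "(v0, x) \<in> R\<^sup>*" "(v0, h x) \<in> R\<^sup>*"
    using \<open>x \<in> C\<close> \<open>h x \<in> C\<close> unfolding mem_C by simp_all
  then have "(v0, h v0) \<in> R\<^sup>*"
    by (metis rtrancl_trans sym_rtrancl_R hom_rtrancl)
  show "h ` C \<subseteq> C"
  proof
    fix y assume "y \<in> h ` C"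
    then obtain w where "w \<in> V" "(v0, w) \<in> R\<^sup>*" "y = h w"
      using mem_C by blast
    then show "y \<in> C"
      unfolding mem_C using \<open>(v0, h v0) \<in> R\<^sup>*\<close> \<open>h ` V \<subseteq> V\<close>
      by (blast intro: rtrancl_trans hom_rtrancl)
  qed
qed

lemma connected_components_of_image_eq_if_meets:
  assumes C: "C \<in> connected_components_of X" and f: "continuous_map X X f"
    and inv: "\<And>x. f (f x) = x" and "x \<in> C" and "f x \<in> C"
  shows "f ` C = C"
proof (rule image_eq_if_involution[OF inv])
  have "connectedin X (f ` C)"
    using connectedin_continuous_map_image[OF f connectedin_connected_components_of[OF C]] .
  moreover have "\<not> disjnt C (f ` C)"
    using \<open>x \<in> C\<close> \<open>f x \<in> C\<close> by (auto simp: disjnt_def)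
  ultimately show "f ` C \<subseteq> C"
    by (rule connected_components_of_maximal[OF C])
qed

lemma openin_qtop:
  "openin (qtop X cl) U \<longleftrightarrow> U \<subseteq> cl ` topspace X \<and> openin X {x \<in> topspace X. cl x \<in> U}"
proof -
  let ?L = "\<lambda>U. U \<subseteq> cl ` topspace X \<and> openin X {x \<in> topspace X. cl x \<in> U}"
  have Int: "?L (U \<inter> V)" if "?L U" "?L V" for U V
  proof -
    have "{x \<in> topspace X. cl x \<in> U \<inter> V} = {x \<in> topspace X. cl x \<in> U} \<inter> {x \<in> topspace X. cl x \<in> V}"
      by blast
    then show ?thesis using that by auto
  qed
  have Union: "?L (\<Union>K)" if "\<forall>U\<in>K. ?L U" for K
  proof -
    have "{x \<in> topspace X. cl x \<in> \<Union>K} = (\<Union>U\<in>K. {x \<in> topspace X. cl x \<in> U})"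
      by blast
    then show ?thesis using that by auto
  qed
  have "istopology ?L"
    unfolding istopology_def using Int Union by blast
  then have "openin (qtop X cl) = ?L"
    unfolding qtop_def by (rule topology_inverse')
  then show ?thesis by simp
qed

lemma topspace_qtop: "topspace (qtop X cl) = cl ` topspace X"
proof
  have "{x \<in> topspace X. cl x \<in> cl ` topspace X} = topspace X"
    by blast
  then have "openin (qtop X cl) (cl ` topspace X)"
    unfolding openin_qtop by simp
  then show "cl ` topspace X \<subseteq> topspace (qtop X cl)"
    by (rule openin_subset)
  show "topspace (qtop X cl) \<subseteq> cl ` topspace X"
    unfolding topspace_def openin_qtop by blast
qed

lemma continuous_map_qtop:
  assumes f: "continuous_map X Y f" and compat: "\<And>p. p \<in> topspace X \<Longrightarrow> g (cl p) = cl' (f p)"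
  shows "continuous_map (qtop X cl) (qtop Y cl') g"
  unfolding continuous_map_def topspace_qtop
proof (intro conjI allI impI)
  show "g \<in> cl ` topspace X \<rightarrow> cl' ` topspace Y"
    using f compat by (auto simp: continuous_map_def)
next
  fix U assume "openin (qtop Y cl') U"
  then have "openin X {p \<in> topspace X. f p \<in> {q \<in> topspace Y. cl' q \<in> U}}"
    unfolding openin_qtop by (intro openin_continuous_map_preimage[OF f]) blast
  moreover have "{p \<in> topspace X. f p \<in> {q \<in> topspace Y. cl' q \<in> U}}
      = {p \<in> topspace X. cl p \<in> {c \<in> cl ` topspace X. g c \<in> U}}"
    using f compat by (auto simp: continuous_map_def)
  ultimately show "openin (qtop X cl) {c \<in> cl ` topspace X. g c \<in> U}"
    unfolding openin_qtop by auto
qed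

lemma weak_B_involution_wB:
  assumes "weak_B_involution k \<Omega> X S" and "x \<in> wB k \<Omega> X"
  shows "S x \<in> wB k \<Omega> X" and "S (S x) = x"
proof -
  have "S ` bdD (wD k \<Omega>) \<subseteq> bdD (wD k \<Omega>)" "S ` X \<subseteq> X" "\<forall>x\<in>bdD (wD k \<Omega>). S (S x) = x"
    using assms(1) unfolding weak_B_involution_def Let_def wD_def by auto
  moreover have "x \<in> bdD (wD k \<Omega>)" "x \<notin> X"
    using assms(2) unfolding wB_def by auto
  ultimately show "S x \<in> wB k \<Omega> X" "S (S x) = x"
    unfolding wB_def by (metis DiffI image_subset_iff, simp)
qed

lemma weak_B_involution_nonempty:
  "weak_B_involution k \<Omega> X S \<Longrightarrow> i \<in> {1..k} \<Longrightarrow> \<Omega> i \<noteq> {}"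
  unfolding weak_B_involution_def Let_def fc_proper_domain_def by auto

lemma weak_B_involution_disjoint:
  "weak_B_involution k \<Omega> X S \<Longrightarrow> i \<in> {1..k} \<Longrightarrow> j \<in> {1..k} \<Longrightarrow> i \<noteq> j \<Longrightarrow> \<Omega> i \<inter> \<Omega> j = {}"
  unfolding weak_B_involution_def Let_def by auto

lemma wclass_self: "p \<in> wpts k \<Omega> X \<Longrightarrow> p \<in> wclass k \<Omega> X S p"
  unfolding wclass_def wrel_def by simp

lemma wD_disjoint_wB: "y \<in> wD k \<Omega> \<Longrightarrow> y \<notin> wB k \<Omega> X"
  unfolding wB_def bdD_def by auto

definition swap_copy :: "bool \<times> sp \<Rightarrow> bool \<times> sp" where
  "swap_copy = (\<lambda>(b, x). (\<not> b, x))"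

lemma swap_copy_Pair [simp]: "swap_copy (b, x) = (\<not> b, x)"
  by (simp add: swap_copy_def)

lemma swap_copy_swap_copy [simp]: "swap_copy (swap_copy p) = p"
  by (cases p) simp

lemma weta_eq_image_swap_copy: "weta c = swap_copy ` c"
  unfolding weta_def swap_copy_def ..

lemma weta_weta [simp]: "weta (weta c) = c"
  unfolding weta_eq_image_swap_copy image_image by simp

lemma wrel_swap_copy:
  assumes "weak_B_involution k \<Omega> X S"
  shows "wrel k \<Omega> X S (swap_copy p) (swap_copy q) \<longleftrightarrow> wrel k \<Omega> X S p q"
proof -
  have "wrel k \<Omega> X S (swap_copy p) (swap_copy q)" if "wrel k \<Omega> X S p q" for p q
  proof -
    note S_wB = weak_B_involution_wB[OF assms]
    from that consider "p = q"
      | x where "x \<in> wB k \<Omega> X" "p = (False, x)" "q = (True, S x)"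
      | x where "x \<in> wB k \<Omega> X" "p = (True, S x)" "q = (False, x)"
      unfolding wrel_def by blast
    then show ?thesis
    proof cases
      case (2 x)
      then show ?thesis
        using S_wB[of x] unfolding wrel_def by (auto intro!: bexI[of _ "S x"])
    next
      case (3 x)
      then show ?thesis
        using S_wB[of x] unfolding wrel_def by (auto intro!: bexI[of _ "S x"])
    qed (simp add: wrel_def)
  qed
  from this[of p q] this[of "swap_copy p" "swap_copy q"] show ?thesis
    by auto
qed

lemma wclass_swap_copy:
  assumes "weak_B_involution k \<Omega> X S"
  shows "wclass k \<Omega> X S (swap_copy p) = swap_copy ` wclass k \<Omega> X S p"
proof -
  have wpts: "swap_copy q \<in> wpts k \<Omega> X \<longleftrightarrow> q \<in> wpts k \<Omega> X" for q
    unfolding wpts_def by (cases q) auto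
  have "q \<in> wclass k \<Omega> X S (swap_copy p) \<longleftrightarrow> swap_copy q \<in> wclass k \<Omega> X S p" for q
    unfolding wclass_def using wpts wrel_swap_copy[OF assms, of p "swap_copy q"] by simp
  moreover have "q \<in> swap_copy ` A \<longleftrightarrow> swap_copy q \<in> A" for q A
    by (metis image_iff swap_copy_swap_copy)
  ultimately show ?thesis
    by blast
qed

lemma continuous_map_weta:
  assumes "weak_B_involution k \<Omega> X S"
  shows "continuous_map (welded_surface k \<Omega> X S) (welded_surface k \<Omega> X S) weta"
  unfolding welded_surface_def
proof (rule continuous_map_qtop)
  let ?T = "prod_topology (discrete_topology (UNIV :: bool set)) (top_of_set RS)"
  have "continuous_map ?T ?T (\<lambda>(b, y). (Not b, id y))"
    by (simp only: continuous_map_prod_top) simp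
  then have "continuous_map ?T ?T swap_copy"
    unfolding swap_copy_def by simp
  moreover have "swap_copy ` wpts k \<Omega> X \<subseteq> wpts k \<Omega> X"
    unfolding wpts_def by auto
  ultimately show "continuous_map (subtopology ?T (wpts k \<Omega> X)) (subtopology ?T (wpts k \<Omega> X)) swap_copy"
    by (auto simp: continuous_map_in_subtopology continuous_map_from_subtopology)
  show "weta (wclass k \<Omega> X S p) = wclass k \<Omega> X S (swap_copy p)" for p
    by (simp add: weta_eq_image_swap_copy wclass_swap_copy[OF assms])
qed

lemma wclass_interior:
  assumes "weak_B_involution k \<Omega> X S" and "y \<in> wD k \<Omega>"
  shows "wclass k \<Omega> X S (b, y) = {(b, y)}"
proof -
  have "y \<noteq> x" "y \<noteq> S x" if "x \<in> wB k \<Omega> X" for x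
    using weak_B_involution_wB(1)[OF assms(1) that] that wD_disjoint_wB[OF assms(2), of X] by auto
  then show ?thesis
    using assms(2) unfolding wclass_def wrel_def wpts_def by auto
qed

lemma wclass_interior_notin_wseam:
  assumes "weak_B_involution k \<Omega> X S" and "y \<in> wD k \<Omega>"
  shows "wclass k \<Omega> X S (b, y) \<notin> wseam k \<Omega> X S"
proof
  assume "wclass k \<Omega> X S (b, y) \<in> wseam k \<Omega> X S"
  then obtain x where x: "x \<in> wB k \<Omega> X" "wclass k \<Omega> X S (False, x) = {(b, y)}"
    unfolding wseam_def wclass_interior[OF assms] by blast
  moreover have "(False, x) \<in> wpts k \<Omega> X"
    using x(1) by (simp add: wpts_def)
  ultimately have "(False, x) \<in> {(b, y)}"
    using wclass_self by metis
  then show False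
    using x(1) wD_disjoint_wB[OF assms(2), of X] by simp
qed

lemma wclass_interior_mem_wcopy_iff:
  assumes wbi: "weak_B_involution k \<Omega> X S"
    and "i \<in> {1..k}" and "j \<in> {1..k}" and "y \<in> \<Omega> i"
  shows "wclass k \<Omega> X S (b, y) \<in> wcopy k \<Omega> X S (c, j) \<longleftrightarrow> (c, j) = (b, i)"
proof
  have interior: "z \<in> wD k \<Omega>" if "z \<in> \<Omega> l" "l \<in> {1..k}" for z l
    using that unfolding wD_def by blast
  assume "wclass k \<Omega> X S (b, y) \<in> wcopy k \<Omega> X S (c, j)"
  then obtain z where "z \<in> \<Omega> j" "wclass k \<Omega> X S (c, z) = wclass k \<Omega> X S (b, y)"
    unfolding wcopy_def by auto
  then have "z \<in> \<Omega> j" "(c, z) = (b, y)"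
    using wclass_interior[OF wbi interior] assms(2,3,4) by auto
  then show "(c, j) = (b, i)"
    using weak_B_involution_disjoint[OF wbi assms(2,3)] assms(4) by blast
qed (use assms(4) in \<open>auto simp: wcopy_def\<close>)

lemma wclass_interior_mem_component_iff:
  assumes wbi: "weak_B_involution k \<Omega> X S" and CG: "CG \<subseteq> gverts k"
    and decomp: "C\<Sigma> - wseam k \<Omega> X S = (\<Union>v\<in>CG. wcopy k \<Omega> X S v)"
    and i: "i \<in> {1..k}" and y: "y \<in> \<Omega> i"
  shows "wclass k \<Omega> X S (b, y) \<in> C\<Sigma> \<longleftrightarrow> (b, i) \<in> CG"
proof -
  have "y \<in> wD k \<Omega>"
    using i y unfolding wD_def by blast
  then have "wclass k \<Omega> X S (b, y) \<in> C\<Sigma> \<longleftrightarrow> (\<exists>v\<in>CG. wclass k \<Omega> X S (b, y) \<in> wcopy k \<Omega> X S v)"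
    using wclass_interior_notin_wseam[OF wbi] decomp by blast
  also have "\<dots> \<longleftrightarrow> (b, i) \<in> CG"
  proof
    assume "\<exists>v\<in>CG. wclass k \<Omega> X S (b, y) \<in> wcopy k \<Omega> X S v"
    then obtain c j where "(c, j) \<in> CG" "wclass k \<Omega> X S (b, y) \<in> wcopy k \<Omega> X S (c, j)"
      by auto
    moreover have "j \<in> {1..k}"
      using \<open>(c, j) \<in> CG\<close> CG unfolding gverts_def by blast
    ultimately show "(b, i) \<in> CG"
      using wclass_interior_mem_wcopy_iff[OF wbi i _ y] by metis
  next
    assume "(b, i) \<in> CG"
    then show "\<exists>v\<in>CG. wclass k \<Omega> X S (b, y) \<in> wcopy k \<Omega> X S v"
      using wclass_interior_mem_wcopy_iff[OF wbi i i y] by blast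
  qed
  finally show ?thesis .
qed

lemma bd0_meets_sym:
  assumes "weak_B_involution k \<Omega> X S" and "S ` bd0 k \<Omega> X i \<inter> bd0 k \<Omega> X j \<noteq> {}"
  shows "S ` bd0 k \<Omega> X j \<inter> bd0 k \<Omega> X i \<noteq> {}"
proof -
  obtain x where x: "x \<in> bd0 k \<Omega> X i" "S x \<in> bd0 k \<Omega> X j"
    using assms(2) by blast
  then have "S (S x) = x"
    using weak_B_involution_wB(2)[OF assms(1)] unfolding bd0_def by blast
  then show ?thesis
    using x by (metis IntI empty_iff image_eqI)
qed

lemma sym_gedges: "sym (gedges k \<Omega> X S)"
  unfolding gedges_def sym_def by blast

lemma eta_hat_eta_hat [simp]: "eta_hat (eta_hat v) = v"
  unfolding eta_hat_def by simp

lemma gedges_eta_hat: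
  assumes "weak_B_involution k \<Omega> X S" and "(u, w) \<in> gedges k \<Omega> X S"
  shows "(eta_hat u, eta_hat w) \<in> gedges k \<Omega> X S"
  using assms(2) bd0_meets_sym[OF assms(1)] unfolding gedges_def eta_hat_def by fastforce

lemma graph_component_eta_hat_image_eq:
  assumes "weak_B_involution k \<Omega> X S" and "graph_component k \<Omega> X S CG"
    and "v \<in> CG" and "eta_hat v \<in> CG"
  shows "eta_hat ` CG = CG"
proof -
  obtain v0 where CG: "CG = {w \<in> gverts k. (v0, w) \<in> (gedges k \<Omega> X S)\<^sup>*}"
    using assms(2) unfolding graph_component_def by blast
  have "eta_hat ` gverts k \<subseteq> gverts k"
    unfolding gverts_def eta_hat_def by auto
  from rtrancl_component_image_eq_if_meets[OF sym_gedges gedges_eta_hat[OF assms(1)] this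
      eta_hat_eta_hat CG assms(3,4)]
  show ?thesis .
qed

lemma graph_component_subset: "graph_component k \<Omega> X S CG \<Longrightarrow> CG \<subseteq> gverts k"
  unfolding graph_component_def by blast

lemma graph_component_nonempty: "graph_component k \<Omega> X S CG \<Longrightarrow> CG \<noteq> {}"
  unfolding graph_component_def by auto

lemma eta_hat_image_eq_iff:
  "eta_hat ` CG = CG \<longleftrightarrow> {i. (False, i) \<in> CG} = {j. (True, j) \<in> CG}"
proof
  assume "eta_hat ` CG = CG"
  then have "(\<not> b, i) \<in> CG" if "(b, i) \<in> CG" for b i
    using that unfolding eta_hat_def by force
  then have "(False, i) \<in> CG \<longleftrightarrow> (True, i) \<in> CG" for i
    by fastforce
  then show "{i. (False, i) \<in> CG} = {j. (True, j) \<in> CG}"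
    by simp
next
  assume "{i. (False, i) \<in> CG} = {j. (True, j) \<in> CG}"
  then have "(False, i) \<in> CG \<longleftrightarrow> (True, i) \<in> CG" for i
    by (simp add: set_eq_iff)
  then have "eta_hat v \<in> CG" if "v \<in> CG" for v
    using that unfolding eta_hat_def by (cases v) (metis (full_types) fst_conv snd_conv)
  then show "eta_hat ` CG = CG"
    by (intro image_eq_if_involution) auto
qed

lemma weta_image_component_eq_iff:
  assumes wbi: "weak_B_involution k \<Omega> X S"
    and C\<Sigma>: "C\<Sigma> \<in> connected_components_of (welded_surface k \<Omega> X S)"
    and CG: "CG \<subseteq> gverts k" "CG \<noteq> {}"
    and decomp: "C\<Sigma> - wseam k \<Omega> X S = (\<Union>v\<in>CG. wcopy k \<Omega> X S v)"
  shows "weta ` C\<Sigma> = C\<Sigma> \<longleftrightarrow> eta_hat ` CG = CG"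
proof -
  note mem = wclass_interior_mem_component_iff[OF wbi CG(1) decomp]
  have weta_wclass: "weta (wclass k \<Omega> X S (b, y)) = wclass k \<Omega> X S (\<not> b, y)" for b y
    using wclass_swap_copy[OF wbi, of "(b, y)"] by (simp add: weta_eq_image_swap_copy)
  have vertex: "i \<in> {1..k}" "\<Omega> i \<noteq> {}" if "(b, i) \<in> CG" for b i
    using that CG(1) weak_B_involution_nonempty[OF wbi] unfolding gverts_def by auto
  show ?thesis
  proof
    assume eq: "weta ` C\<Sigma> = C\<Sigma>"
    have "(\<not> b, i) \<in> CG" if bi: "(b, i) \<in> CG" for b i
    proof -
      obtain y where y: "y \<in> \<Omega> i"
        using vertex(2)[OF bi] by blast
      have "weta (wclass k \<Omega> X S (b, y)) \<in> C\<Sigma>"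
        using mem[OF vertex(1)[OF bi] y] bi eq by blast
      then show ?thesis
        using mem[OF vertex(1)[OF bi] y] weta_wclass by simp
    qed
    then show "eta_hat ` CG = CG"
      by (intro image_eq_if_involution) (auto simp: eta_hat_def)
  next
    assume eq: "eta_hat ` CG = CG"
    obtain b i where bi: "(b, i) \<in> CG"
      using CG(2) by force
    obtain y where y: "y \<in> \<Omega> i"
      using vertex(2)[OF bi] by blast
    have "(\<not> b, i) \<in> CG"
      using bi eq unfolding eta_hat_def by force
    then show "weta ` C\<Sigma> = C\<Sigma>"
      using connected_components_of_image_eq_if_meets[OF C\<Sigma> continuous_map_weta[OF wbi] weta_weta]
        mem[OF vertex(1)[OF bi] y] bi weta_wclass by metis
  qed
qed

theorem lemma4p13:
  fixes k :: nat and \<Omega> :: "nat \<Rightarrow> sp set" and X :: "sp set" and S :: "sp \<Rightarrow> sp"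
    and C\<Sigma> :: "(bool \<times> sp) set set" and CG :: "(bool \<times> nat) set"
  assumes "weak_B_involution k \<Omega> X S"
    and "C\<Sigma> \<in> connected_components_of (welded_surface k \<Omega> X S)"
    and "graph_component k \<Omega> X S CG"
    and "C\<Sigma> - wseam k \<Omega> X S = (\<Union>v\<in>CG. wcopy k \<Omega> X S v)"
  defines "I \<equiv> {i. (False, i) \<in> CG}" and "J \<equiv> {j. (True, j) \<in> CG}"
  shows "(weta ` C\<Sigma> = C\<Sigma> \<longleftrightarrow> eta_hat ` CG = CG)
       \<and> (eta_hat ` CG = CG \<longleftrightarrow> I = J)
       \<and> (I = J \<longleftrightarrow> I \<inter> J \<noteq> {})"
proof -
  have CG: "CG \<subseteq> gverts k" "CG \<noteq> {}"
    using assms(3) by (rule graph_component_subset, rule graph_component_nonempty)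
  have "I \<inter> J \<noteq> {}" if "I = J"
  proof -
    obtain b i where "(b, i) \<in> CG"
      using CG(2) by force
    then have "i \<in> I \<union> J"
      unfolding I_def J_def by (cases b) auto
    then show ?thesis
      using that by blast
  qed
  moreover have "eta_hat ` CG = CG" if meet: "I \<inter> J \<noteq> {}"
  proof -
    obtain i where "(False, i) \<in> CG" "(True, i) \<in> CG"
      using meet unfolding I_def J_def by blast
    then show ?thesis
      by (intro graph_component_eta_hat_image_eq[OF assms(1,3)]) (auto simp: eta_hat_def)
  qed
  ultimately show ?thesis
    using weta_image_component_eq_iff[OF assms(1,2) CG assms(4)] eta_hat_image_eq_iff[of CG]
    unfolding I_def J_def by blast
qed

end
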